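(* For any positive integer $k$, $dim_s(C_{2k+1}\times C_{2k+1})=(2k+1)(k+1)$.
   Context: $C_n$ is the cycle on $n$ vertices. The direct product $G\times H$ has vertex set $V(G)\times V(H)$, with $(a,b)$ adjacent to $(c,d)$ iff $ac\in E(G)$ and $bd\in E(H)$. For a connected graph $G$, $I_G[u,v]$ is the set of vertices lying on some shortest $u$–$v$ path; a vertex $w$ strongly resolves $u,v$ if $v\in I_G[u,w]$ or $u\in I_G[v,w]$; a strong resolving set is a set $S\subseteq V(G)$ such that every pair of vertices is strongly resolved by some vertex of $S$; $dim_s(G)$ is the minimum cardinality of a strong resolving set. *)

theory Defs
  imports Main
begin

definition is_walk :: "'a set \<Rightarrow> ('a \<Rightarrow> 'a \<Rightarrow> bool) \<Rightarrow> (nat \<Rightarrow> 'a) \<Rightarrow> nat \<Rightarrow> 'a \<Rightarrow> 'a \<Rightarrow> bool" where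
  "is_walk V E p k u v \<longleftrightarrow> p 0 = u \<and> p k = v \<and> (\<forall>i\<le>k. p i \<in> V) \<and> (\<forall>i<k. E (p i) (p (Suc i)))"

definition gdist :: "'a set \<Rightarrow> ('a \<Rightarrow> 'a \<Rightarrow> bool) \<Rightarrow> 'a \<Rightarrow> 'a \<Rightarrow> nat" where
  "gdist V E u v = (LEAST k. \<exists>p. is_walk V E p k u v)"

definition interval :: "'a set \<Rightarrow> ('a \<Rightarrow> 'a \<Rightarrow> bool) \<Rightarrow> 'a \<Rightarrow> 'a \<Rightarrow> 'a set" where
  "interval V E u v = {w. \<exists>p. is_walk V E p (gdist V E u v) u v \<and> (\<exists>i\<le>gdist V E u v. p i = w)}"

definition strongly_resolves :: "'a set \<Rightarrow> ('a \<Rightarrow> 'a \<Rightarrow> bool) \<Rightarrow> 'a \<Rightarrow> 'a \<Rightarrow> 'a \<Rightarrow> bool" where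
  "strongly_resolves V E w u v \<longleftrightarrow> v \<in> interval V E u w \<or> u \<in> interval V E v w"

definition strong_resolving_set :: "'a set \<Rightarrow> ('a \<Rightarrow> 'a \<Rightarrow> bool) \<Rightarrow> 'a set \<Rightarrow> bool" where
  "strong_resolving_set V E S \<longleftrightarrow> S \<subseteq> V \<and>
     (\<forall>u\<in>V. \<forall>v\<in>V. u \<noteq> v \<longrightarrow> (\<exists>w\<in>S. strongly_resolves V E w u v))"

definition strong_metric_dim :: "'a set \<Rightarrow> ('a \<Rightarrow> 'a \<Rightarrow> bool) \<Rightarrow> nat" where
  "strong_metric_dim V E = (LEAST n. \<exists>S. strong_resolving_set V E S \<and> card S = n)"

definition cycle_V :: "nat \<Rightarrow> nat set" where
  "cycle_V n = {0..<n}"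

definition cycle_E :: "nat \<Rightarrow> nat \<Rightarrow> nat \<Rightarrow> bool" where
  "cycle_E n a b \<longleftrightarrow> a < n \<and> b < n \<and> (b = (a + 1) mod n \<or> a = (b + 1) mod n)"

definition dprod_V :: "'a set \<Rightarrow> 'b set \<Rightarrow> ('a \<times> 'b) set" where
  "dprod_V V1 V2 = V1 \<times> V2"

definition dprod_E :: "('a \<Rightarrow> 'a \<Rightarrow> bool) \<Rightarrow> ('b \<Rightarrow> 'b \<Rightarrow> bool) \<Rightarrow> ('a \<times> 'b) \<Rightarrow> ('a \<times> 'b) \<Rightarrow> bool" where
  "dprod_E E1 E2 x y \<longleftrightarrow> E1 (fst x) (fst y) \<and> E2 (snd x) (snd y)"

end

theory Submission
  imports Defs
begin

text \<open>A walk in a direct product is a pair of walks of the same length. Together with the parity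
  of walk lengths in \<open>C\<^sub>n\<close> this gives a closed formula for the distance in \<open>C\<^sub>n \<times> C\<^sub>n\<close>,
  \<open>n = 2k + 1\<close>; its diameter is \<open>2k\<close>, attained by pairs of vertices that differ by \<open>\<plusminus>1\<close> in exactly
  one coordinate.

  Lower bound: two such vertices are each farthest from the other, so every strong resolving set
  contains one of them; hence it covers the cycle formed by each row and has at least \<open>k + 1\<close>
  vertices in each of the \<open>n\<close> rows.

  Upper bound: the \<open>n(k + 1)\<close> vertices \<open>(a, b)\<close> with \<open>b - a mod n\<close> even form a strong resolving
  set. Given \<open>u\<close> outside it and \<open>v\<close>, prolong a shortest \<open>u\<close>--\<open>v\<close> path beyond \<open>v\<close> to a vertex \<open>y\<close>
  where the distance from \<open>u\<close> is locally maximal. The distance formula shows that \<open>y\<close> differs from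
  \<open>u\<close> by \<open>\<plusminus>1\<close> in one coordinate only, which flips the parity of the offset, so \<open>y\<close> lies in the set
  and strongly resolves \<open>u, v\<close>.\<close>

section \<open>Walks, distances and intervals\<close>

definition has_walk :: "'a set \<Rightarrow> ('a \<Rightarrow> 'a \<Rightarrow> bool) \<Rightarrow> nat \<Rightarrow> 'a \<Rightarrow> 'a \<Rightarrow> bool" where
  "has_walk V E m u v \<longleftrightarrow> (\<exists>p. is_walk V E p m u v)"

lemma gdist_eq_Least_has_walk: "gdist V E u v = (LEAST m. has_walk V E m u v)"
  by (simp add: gdist_def has_walk_def)

lemma gdist_le: "has_walk V E m u v \<Longrightarrow> gdist V E u v \<le> m"
  unfolding gdist_eq_Least_has_walk by (rule Least_le)

lemma has_walk_gdist: "has_walk V E m u v \<Longrightarrow> has_walk V E (gdist V E u v) u v"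
  unfolding gdist_eq_Least_has_walk by (rule LeastI)

lemma has_walk_0: "has_walk V E 0 u v \<longleftrightarrow> u = v \<and> u \<in> V"
  unfolding has_walk_def is_walk_def by auto

lemma has_walk_Suc:
  "has_walk V E (Suc m) u w \<longleftrightarrow> (\<exists>v. has_walk V E m u v \<and> E v w \<and> w \<in> V)"
proof
  assume "has_walk V E (Suc m) u w"
  then obtain p where p: "is_walk V E p (Suc m) u w" unfolding has_walk_def by auto
  then have "is_walk V E p m u (p m)" "E (p m) w" "w \<in> V" unfolding is_walk_def by auto
  then show "\<exists>v. has_walk V E m u v \<and> E v w \<and> w \<in> V" unfolding has_walk_def by blast
next
  assume "\<exists>v. has_walk V E m u v \<and> E v w \<and> w \<in> V"
  then obtain v p where p: "is_walk V E p m u v" and "E v w" "w \<in> V"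
    unfolding has_walk_def by auto
  then have "is_walk V E (p(Suc m := w)) (Suc m) u w"
    unfolding is_walk_def by (auto simp: le_Suc_eq less_Suc_eq)
  then show "has_walk V E (Suc m) u w" unfolding has_walk_def by blast
qed

lemma is_walk_append:
  assumes p: "is_walk V E p m u v" and q: "is_walk V E q m' v w"
  shows "is_walk V E (\<lambda>i. if i \<le> m then p i else q (i - m)) (m + m') u w"
  unfolding is_walk_def
proof (intro conjI allI impI)
  fix i assume "i < m + m'"
  then show "E (if i \<le> m then p i else q (i - m)) (if Suc i \<le> m then p (Suc i) else q (Suc i - m))"
    using p q unfolding is_walk_def
    by (cases "i < m") (auto simp: Suc_diff_le less_imp_le_nat dest: spec[of _ "i - m"])
qed (use p q in \<open>auto simp: is_walk_def\<close>)

lemma has_walk_append: "has_walk V E m u v \<Longrightarrow> has_walk V E m' v w \<Longrightarrow> has_walk V E (m + m') u w"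
  unfolding has_walk_def by (meson is_walk_append)

lemma endpoint_mem_interval:
  "has_walk V E (gdist V E u v) u v \<Longrightarrow> v \<in> interval V E u v"
  unfolding has_walk_def interval_def is_walk_def by auto

lemma mem_interval_if_gdist_add:
  assumes "has_walk V E (gdist V E u v) u v" "has_walk V E (gdist V E v w) v w"
    and add: "gdist V E u w = gdist V E u v + gdist V E v w"
  shows "v \<in> interval V E u w"
proof -
  obtain p q where p: "is_walk V E p (gdist V E u v) u v" and q: "is_walk V E q (gdist V E v w) v w"
    using assms(1,2) unfolding has_walk_def by blast
  let ?r = "\<lambda>i. if i \<le> gdist V E u v then p i else q (i - gdist V E u v)"
  have "is_walk V E ?r (gdist V E u w) u w" unfolding add by (rule is_walk_append[OF p q])
  moreover have "?r (gdist V E u v) = v" using p unfolding is_walk_def by simp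
  ultimately show ?thesis unfolding interval_def add by fastforce
qed

lemma farthest_mem_interval_eq:
  assumes "y \<in> interval V E x w" and far: "\<forall>z\<in>V. gdist V E x z \<le> gdist V E x y"
  shows "y = w"
proof -
  obtain p i where p: "is_walk V E p (gdist V E x w) x w" and i: "i \<le> gdist V E x w" "p i = y"
    using assms(1) unfolding interval_def by auto
  have "has_walk V E i x y" using p i unfolding has_walk_def is_walk_def by auto
  then have "gdist V E x y \<le> i" by (rule gdist_le)
  moreover have "w \<in> V" using p unfolding is_walk_def by auto
  ultimately have "i = gdist V E x w" using far i(1) by force
  then show ?thesis using p i unfolding is_walk_def by auto
qed

text \<open>A pair of vertices each farthest from the other is strongly resolved only by one of the two.\<close>

lemma strong_resolving_set_mutually_farthest:
  assumes "strong_resolving_set V E S" "u \<in> V" "v \<in> V" "u \<noteq> v"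
    and "\<forall>w\<in>V. gdist V E u w \<le> gdist V E u v" "\<forall>w\<in>V. gdist V E v w \<le> gdist V E v u"
  shows "u \<in> S \<or> v \<in> S"
proof -
  obtain w where "w \<in> S" "v \<in> interval V E u w \<or> u \<in> interval V E v w"
    using assms(1-4) unfolding strong_resolving_set_def strongly_resolves_def by blast
  then show ?thesis using farthest_mem_interval_eq assms(5,6) by metis
qed

lemma has_walk_dprod:
  "has_walk (dprod_V V1 V2) (dprod_E E1 E2) m (a, b) (c, d) \<longleftrightarrow>
   has_walk V1 E1 m a c \<and> has_walk V2 E2 m b d"
proof (induction m arbitrary: c d)
  case 0
  then show ?case by (auto simp: has_walk_0 dprod_V_def)
next
  case (Suc m)
  then show ?case
    unfolding has_walk_Suc split_paired_Ex Suc.IH by (auto simp: dprod_E_def dprod_V_def)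
qed

text \<open>In a finite connected graph, a shortest path from \<open>u\<close> through \<open>v\<close> can be prolonged to a
  vertex \<open>y\<close> at which the distance from \<open>u\<close> is locally maximal: take \<open>y\<close> farthest from \<open>u\<close> among
  the vertices reached from \<open>u\<close> by a shortest path through \<open>v\<close>.\<close>

lemma interval_extends_to_local_max:
  assumes "finite V" and conn: "\<And>x y. x \<in> V \<Longrightarrow> y \<in> V \<Longrightarrow> \<exists>m. has_walk V E m x y"
    and u: "u \<in> V" and v: "v \<in> V"
  obtains y where "y \<in> V" "v \<in> interval V E u y"
    "\<And>y'. y' \<in> V \<Longrightarrow> E y y' \<Longrightarrow> gdist V E u y' \<le> gdist V E u y"
proof -
  let ?d = "gdist V E"
  have short: "has_walk V E (?d x y) x y" if "x \<in> V" "y \<in> V" for x y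
    using conn[OF that] by (metis has_walk_gdist)
  define Y where "Y = {y \<in> V. ?d u y = ?d u v + ?d v y}"
  have "?d v v = 0" using gdist_le[of V E 0 v v] v by (simp add: has_walk_0)
  then have "v \<in> Y" using v unfolding Y_def by simp
  moreover have "finite Y" using \<open>finite V\<close> unfolding Y_def by simp
  ultimately have "Max (?d u ` Y) \<in> ?d u ` Y" by (intro Max_in) auto
  then obtain y where y: "y \<in> Y" and y_Max: "?d u y = Max (?d u ` Y)" by (auto simp: image_iff)
  have y_max: "?d u z \<le> ?d u y" if "z \<in> Y" for z
    unfolding y_Max using \<open>finite Y\<close> that by simp
  have yV: "y \<in> V" and y_add: "?d u y = ?d u v + ?d v y" using y unfolding Y_def by auto
  show thesis
  proof
    show "v \<in> interval V E u y" by (rule mem_interval_if_gdist_add[OF short[OF u v] short[OF v yV] y_add])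
  next
    fix y' assume y': "y' \<in> V" "E y y'"
    have "has_walk V E (Suc (?d v y)) v y'" unfolding has_walk_Suc using short[OF v yV] y' by blast
    then have vy': "?d v y' \<le> Suc (?d v y)" by (rule gdist_le)
    have uy': "?d u y' \<le> ?d u v + ?d v y'"
      by (rule gdist_le[OF has_walk_append[OF short[OF u v] short[OF v y'(1)]]])
    show "?d u y' \<le> ?d u y"
    proof (rule ccontr)
      assume far: "\<not> ?d u y' \<le> ?d u y"
      then have "?d u y' = ?d u v + ?d v y'" using vy' uy' y_add by linarith
      then have "y' \<in> Y" using y'(1) unfolding Y_def by simp
      then show False using y_max far by blast
    qed
  qed (use yV in simp)
qed

section \<open>Cycles\<close>

definition cyc_succ :: "nat \<Rightarrow> nat \<Rightarrow> nat" where
  "cyc_succ n x = (if x + 1 = n then 0 else x + 1)"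

definition cyc_pred :: "nat \<Rightarrow> nat \<Rightarrow> nat" where
  "cyc_pred n x = (if x = 0 then n - 1 else x - 1)"

definition cyc_offset :: "nat \<Rightarrow> nat \<Rightarrow> nat \<Rightarrow> nat" where
  "cyc_offset n a c = (if a \<le> c then c - a else c + n - a)"

lemma cyc_succ_lt: "x < n \<Longrightarrow> cyc_succ n x < n"
  unfolding cyc_succ_def by auto

lemma cyc_pred_lt: "x < n \<Longrightarrow> cyc_pred n x < n"
  unfolding cyc_pred_def by auto

lemma cyc_succ_pred: "x < n \<Longrightarrow> cyc_succ n (cyc_pred n x) = x"
  unfolding cyc_succ_def cyc_pred_def by auto

lemma cyc_pred_succ: "x < n \<Longrightarrow> cyc_pred n (cyc_succ n x) = x"
  unfolding cyc_succ_def cyc_pred_def by auto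

lemma cycle_E_iff: "cycle_E n x y \<longleftrightarrow> x < n \<and> y < n \<and> (y = cyc_succ n x \<or> x = cyc_succ n y)"
  unfolding cycle_E_def cyc_succ_def by auto

lemma cyc_offset_lt: "a < n \<Longrightarrow> c < n \<Longrightarrow> cyc_offset n a c < n"
  unfolding cyc_offset_def by auto

lemma cyc_offset_succ_right:
  "a < n \<Longrightarrow> c < n \<Longrightarrow> cyc_offset n a (cyc_succ n c) = cyc_succ n (cyc_offset n a c)"
  unfolding cyc_offset_def cyc_succ_def by auto

lemma cyc_offset_pred_right:
  "a < n \<Longrightarrow> c < n \<Longrightarrow> cyc_offset n a (cyc_pred n c) = cyc_pred n (cyc_offset n a c)"
  unfolding cyc_offset_def cyc_pred_def by auto

lemma cyc_offset_succ_left: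
  "a < n \<Longrightarrow> c < n \<Longrightarrow> cyc_offset n (cyc_succ n a) c = cyc_pred n (cyc_offset n a c)"
  unfolding cyc_offset_def cyc_succ_def cyc_pred_def by auto

lemma cyc_offset_pred_left:
  "a < n \<Longrightarrow> c < n \<Longrightarrow> cyc_offset n (cyc_pred n a) c = cyc_succ n (cyc_offset n a c)"
  unfolding cyc_offset_def cyc_succ_def cyc_pred_def by auto

lemma bij_betw_cyc_offset: "a < n \<Longrightarrow> bij_betw (cyc_offset n a) {..<n} {..<n}"
proof (rule bij_betw_imageI)
  assume "a < n"
  then show "inj_on (cyc_offset n a) {..<n}"
    unfolding inj_on_def cyc_offset_def by auto
  show "cyc_offset n a ` {..<n} = {..<n}"
  proof
    show "{..<n} \<subseteq> cyc_offset n a ` {..<n}"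
    proof
      fix r assume "r \<in> {..<n}"
      then have "cyc_offset n a (if a + r < n then a + r else a + r - n) = r"
        "(if a + r < n then a + r else a + r - n) \<in> {..<n}"
        using \<open>a < n\<close> unfolding cyc_offset_def by auto
      then show "r \<in> cyc_offset n a ` {..<n}" by (rule image_eqI[OF sym])
    qed
  qed (use \<open>a < n\<close> cyc_offset_lt in auto)
qed

text \<open>A walk of length \<open>m\<close> in \<open>C\<^sub>n\<close> has an integer net displacement \<open>t\<close> with \<open>|t| \<le> m\<close> and
  \<open>t \<equiv> m (mod 2)\<close>; it realises the offset \<open>r < n\<close> iff \<open>t \<equiv> r (mod n)\<close>, and among these
  displacements \<open>t = r\<close> and \<open>t = r - n\<close> are the least restrictive.\<close>

definition offset_walkable :: "nat \<Rightarrow> nat \<Rightarrow> nat \<Rightarrow> bool" where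
  "offset_walkable n m r \<longleftrightarrow> (r \<le> m \<and> even (m + r)) \<or> (n \<le> m + r \<and> even (m + r + n))"

lemma offset_walkable_Suc_succ:
  "r < n \<Longrightarrow> offset_walkable n m r \<Longrightarrow> offset_walkable n (Suc m) (cyc_succ n r)"
  unfolding offset_walkable_def cyc_succ_def by (auto split: if_splits)

lemma offset_walkable_Suc_of_succ:
  "r < n \<Longrightarrow> offset_walkable n m (cyc_succ n r) \<Longrightarrow> offset_walkable n (Suc m) r"
  unfolding offset_walkable_def cyc_succ_def by (auto split: if_splits)

lemma offset_walkable_SucD:
  "r < n \<Longrightarrow> 2 \<le> n \<Longrightarrow> offset_walkable n (Suc m) r \<Longrightarrow>
    offset_walkable n m (cyc_pred n r) \<or> offset_walkable n m (cyc_succ n r)"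
  unfolding offset_walkable_def cyc_succ_def cyc_pred_def by (auto split: if_splits) presburger+

lemma has_walk_cycle:
  assumes "2 \<le> n"
  shows "has_walk (cycle_V n) (cycle_E n) m a c \<longleftrightarrow>
    a < n \<and> c < n \<and> offset_walkable n m (cyc_offset n a c)"
proof (induction m arbitrary: c)
  case 0
  then show ?case
    by (auto simp: has_walk_0 cycle_V_def offset_walkable_def cyc_offset_def)
next
  case (Suc m)
  show ?case
  proof
    assume "has_walk (cycle_V n) (cycle_E n) (Suc m) a c"
    then obtain c' where "has_walk (cycle_V n) (cycle_E n) m a c'" and e: "cycle_E n c' c"
      unfolding has_walk_Suc by auto
    then have a: "a < n" "c' < n" "c < n" and w: "offset_walkable n m (cyc_offset n a c')"
      using Suc.IH cycle_E_iff by auto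
    from e consider "c = cyc_succ n c'" | "c' = cyc_succ n c" unfolding cycle_E_iff by auto
    then have "offset_walkable n (Suc m) (cyc_offset n a c)"
    proof cases
      case 1
      then show ?thesis
        using offset_walkable_Suc_succ[OF cyc_offset_lt w] cyc_offset_succ_right a by simp
    next
      case 2
      then show ?thesis
        using offset_walkable_Suc_of_succ[OF cyc_offset_lt] w cyc_offset_succ_right a by simp
    qed
    then show "a < n \<and> c < n \<and> offset_walkable n (Suc m) (cyc_offset n a c)" using a by simp
  next
    assume "a < n \<and> c < n \<and> offset_walkable n (Suc m) (cyc_offset n a c)"
    then have a: "a < n" "c < n"
      and "offset_walkable n m (cyc_pred n (cyc_offset n a c)) \<or>
           offset_walkable n m (cyc_succ n (cyc_offset n a c))"
      using offset_walkable_SucD[OF cyc_offset_lt assms] by auto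
    then consider "has_walk (cycle_V n) (cycle_E n) m a (cyc_pred n c)"
      | "has_walk (cycle_V n) (cycle_E n) m a (cyc_succ n c)"
      using Suc.IH cyc_pred_lt cyc_succ_lt cyc_offset_pred_right cyc_offset_succ_right by auto
    then show "has_walk (cycle_V n) (cycle_E n) (Suc m) a c"
      unfolding has_walk_Suc using a cyc_pred_lt cyc_succ_lt cyc_succ_pred
      by cases (auto simp: cycle_E_iff cycle_V_def)
  qed
qed

lemma card_vertex_cover_cycle:
  assumes "T \<subseteq> {..<n}" and cover: "\<And>j. j < n \<Longrightarrow> j \<in> T \<or> cyc_succ n j \<in> T"
  shows "n \<le> 2 * card T"
proof -
  have "finite T" using assms(1) finite_subset by blast
  have "{..<n} \<subseteq> T \<union> cyc_pred n ` T"
  proof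
    fix j assume "j \<in> {..<n}"
    then have "j \<in> T \<or> cyc_succ n j \<in> T" "cyc_pred n (cyc_succ n j) = j"
      using cover cyc_pred_succ by auto
    then show "j \<in> T \<union> cyc_pred n ` T" by (metis UnI1 UnI2 imageI)
  qed
  then have "n \<le> card (T \<union> cyc_pred n ` T)"
    using card_mono[of "T \<union> cyc_pred n ` T" "{..<n}"] \<open>finite T\<close> by auto
  also have "\<dots> \<le> card T + card (cyc_pred n ` T)" by (rule card_Un_le)
  also have "\<dots> \<le> 2 * card T" using card_image_le[OF \<open>finite T\<close>] by simp
  finally show ?thesis .
qed

section \<open>Distances in \<open>C\<^sub>n \<times> C\<^sub>n\<close> for odd \<open>n\<close>\<close>

definition cycle_norm :: "nat \<Rightarrow> nat \<Rightarrow> nat" where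
  "cycle_norm n r = min r (n - r)"

text \<open>The distance in \<open>C\<^sub>n \<times> C\<^sub>n\<close>, \<open>n\<close> odd, between two vertices whose coordinates are at
  distances \<open>d\<^sub>1\<close> and \<open>d\<^sub>2\<close> in \<open>C\<^sub>n\<close>: if the parities disagree, one coordinate has to go the
  long way round.\<close>

definition odd_dprod_dist :: "nat \<Rightarrow> nat \<Rightarrow> nat \<Rightarrow> nat" where
  "odd_dprod_dist n d1 d2 = (if even (d1 + d2) then max d1 d2 else n - max d1 d2)"

lemma offset_walkable_odd_dprod_dist:
  assumes "n = 2*k+1" "r1 < n" "r2 < n"
  shows "offset_walkable n (odd_dprod_dist n (cycle_norm n r1) (cycle_norm n r2)) r1 \<and>
    offset_walkable n (odd_dprod_dist n (cycle_norm n r1) (cycle_norm n r2)) r2"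
  using assms unfolding offset_walkable_def odd_dprod_dist_def cycle_norm_def min_def max_def
  by (auto split: if_splits)

lemma Least_offset_walkable:
  assumes "n = 2*k+1" "r1 < n" "r2 < n"
  shows "(LEAST m. offset_walkable n m r1 \<and> offset_walkable n m r2) =
    odd_dprod_dist n (cycle_norm n r1) (cycle_norm n r2)"
proof (rule Least_equality)
  show "odd_dprod_dist n (cycle_norm n r1) (cycle_norm n r2) \<le> m"
    if "offset_walkable n m r1 \<and> offset_walkable n m r2" for m
    using assms that unfolding offset_walkable_def odd_dprod_dist_def cycle_norm_def min_def max_def
    by (auto split: if_splits)
qed (rule offset_walkable_odd_dprod_dist[OF assms])

lemma cycle_norm_le: "n = 2*k+1 \<Longrightarrow> cycle_norm n r \<le> k"
  unfolding cycle_norm_def by auto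

lemma odd_dprod_dist_le: "n = 2*k+1 \<Longrightarrow> d1 \<le> k \<Longrightarrow> d2 \<le> k \<Longrightarrow> odd_dprod_dist n d1 d2 \<le> 2*k"
  unfolding odd_dprod_dist_def by (auto dest: odd_pos)

abbreviation cycle_dprod_V :: "nat \<Rightarrow> (nat \<times> nat) set" where
  "cycle_dprod_V n \<equiv> dprod_V (cycle_V n) (cycle_V n)"

abbreviation cycle_dprod_E :: "nat \<Rightarrow> nat \<times> nat \<Rightarrow> nat \<times> nat \<Rightarrow> bool" where
  "cycle_dprod_E n \<equiv> dprod_E (cycle_E n) (cycle_E n)"

lemma mem_cycle_dprod_V: "(a, b) \<in> cycle_dprod_V n \<longleftrightarrow> a < n \<and> b < n"
  by (simp add: dprod_V_def cycle_V_def)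

lemma gdist_cycle_dprod:
  assumes n: "n = 2*k+1" "0 < k" and "a < n" "b < n" "c < n" "d < n"
  shows "gdist (cycle_dprod_V n) (cycle_dprod_E n) (a, b) (c, d) =
    odd_dprod_dist n (cycle_norm n (cyc_offset n a c)) (cycle_norm n (cyc_offset n b d))"
proof -
  have "has_walk (cycle_dprod_V n) (cycle_dprod_E n) m (a, b) (c, d) \<longleftrightarrow>
    offset_walkable n m (cyc_offset n a c) \<and> offset_walkable n m (cyc_offset n b d)" for m
    using assms by (simp add: has_walk_dprod has_walk_cycle)
  then show ?thesis
    using Least_offset_walkable[OF n(1)] cyc_offset_lt assms by (simp add: gdist_eq_Least_has_walk)
qed

lemma has_walk_gdist_cycle_dprod:
  assumes n: "n = 2*k+1" "0 < k" and "u \<in> cycle_dprod_V n" "v \<in> cycle_dprod_V n"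
  shows "has_walk (cycle_dprod_V n) (cycle_dprod_E n) (gdist (cycle_dprod_V n) (cycle_dprod_E n) u v) u v"
proof -
  obtain a b c d where uv: "u = (a, b)" "v = (c, d)" and lt: "a < n" "b < n" "c < n" "d < n"
    using assms(3,4) by (cases u, cases v) (auto simp: mem_cycle_dprod_V)
  let ?m = "odd_dprod_dist n (cycle_norm n (cyc_offset n a c)) (cycle_norm n (cyc_offset n b d))"
  have "has_walk (cycle_dprod_V n) (cycle_dprod_E n) ?m (a, b) (c, d)"
    using offset_walkable_odd_dprod_dist[OF n(1) cyc_offset_lt cyc_offset_lt] n lt
    by (simp add: has_walk_dprod has_walk_cycle)
  then show ?thesis unfolding uv by (rule has_walk_gdist)
qed

lemma gdist_cycle_dprod_le:
  assumes n: "n = 2*k+1" "0 < k" and "u \<in> cycle_dprod_V n" "v \<in> cycle_dprod_V n"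
  shows "gdist (cycle_dprod_V n) (cycle_dprod_E n) u v \<le> 2*k"
proof -
  obtain a b c d where uv: "u = (a, b)" "v = (c, d)" and lt: "a < n" "b < n" "c < n" "d < n"
    using assms(3,4) by (cases u, cases v) (auto simp: mem_cycle_dprod_V)
  show ?thesis
    unfolding uv gdist_cycle_dprod[OF n lt] using odd_dprod_dist_le cycle_norm_le n(1) by blast
qed

lemma gdist_cycle_dprod_succ:
  assumes n: "n = 2*k+1" "0 < k" and "a < n" "j < n"
  shows "gdist (cycle_dprod_V n) (cycle_dprod_E n) (a, j) (a, cyc_succ n j) = 2*k"
    and "gdist (cycle_dprod_V n) (cycle_dprod_E n) (a, cyc_succ n j) (a, j) = 2*k"
  using assms cyc_succ_lt[of j n]
  by (simp_all add: gdist_cycle_dprod odd_dprod_dist_def cycle_norm_def cyc_offset_def cyc_succ_def)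

section \<open>Lower bound\<close>

lemma card_strong_resolving_set_cycle_dprod_ge:
  assumes n: "n = 2*k+1" "0 < k" and S: "strong_resolving_set (cycle_dprod_V n) (cycle_dprod_E n) S"
  shows "n * (k + 1) \<le> card S"
proof -
  let ?d = "gdist (cycle_dprod_V n) (cycle_dprod_E n)"
  have SV: "S \<subseteq> cycle_dprod_V n" using S unfolding strong_resolving_set_def by simp
  have far: "?d x w \<le> 2*k" if "x \<in> cycle_dprod_V n" "w \<in> cycle_dprod_V n" for x w
    using gdist_cycle_dprod_le[OF n that] .
  have cover: "(a, j) \<in> S \<or> (a, cyc_succ n j) \<in> S" if a: "a < n" and j: "j < n" for a j
  proof (rule strong_resolving_set_mutually_farthest[OF S])
    show aj: "(a, j) \<in> cycle_dprod_V n" and aj': "(a, cyc_succ n j) \<in> cycle_dprod_V n"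
      using a j cyc_succ_lt by (auto simp: mem_cycle_dprod_V)
    show "(a, j) \<noteq> (a, cyc_succ n j)" using n by (auto simp: cyc_succ_def)
    show "\<forall>w\<in>cycle_dprod_V n. ?d (a, j) w \<le> ?d (a, j) (a, cyc_succ n j)"
      using far[OF aj] by (simp add: gdist_cycle_dprod_succ[OF n a j])
    show "\<forall>w\<in>cycle_dprod_V n. ?d (a, cyc_succ n j) w \<le> ?d (a, cyc_succ n j) (a, j)"
      using far[OF aj'] by (simp add: gdist_cycle_dprod_succ[OF n a j])
  qed
  define T where "T a = {j. (a, j) \<in> S}" for a
  have T_sub: "T a \<subseteq> {..<n}" for a using SV unfolding T_def by (auto simp: mem_cycle_dprod_V)
  have "S = Sigma {..<n} T" using SV unfolding T_def by (auto simp: mem_cycle_dprod_V)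
  then have "card S = (\<Sum>a<n. card (T a))"
    by (simp add: card_SigmaI finite_subset[OF T_sub])
  also have "\<dots> \<ge> (\<Sum>a<n. k + 1)"
  proof (rule sum_mono)
    fix a assume "a \<in> {..<n}"
    then have "n \<le> 2 * card (T a)"
      using card_vertex_cover_cycle[OF T_sub] cover unfolding T_def by auto
    then show "k + 1 \<le> card (T a)" using n by simp
  qed
  finally show ?thesis by simp
qed

section \<open>Upper bound\<close>

text \<open>The two neighbours of an offset of norm \<open>d \<le> k\<close> have norms \<open>min (d + 1) k\<close> and \<open>|d - 1|\<close>;
  \<open>N1\<close> and \<open>N2\<close> stand for the norms reachable in one step.\<close>

lemma odd_dprod_dist_not_local_max:
  assumes n: "n = 2*k+1" and k: "0 < k" and d: "d1 \<le> k" "d2 \<le> k"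
    and not_unit: "\<not> ((d1 = 0 \<and> d2 = 1) \<or> (d1 = 1 \<and> d2 = 0))"
    and N1: "min (d1 + 1) k \<in> N1" "(if d1 = 0 then 1 else d1 - 1) \<in> N1"
    and N2: "min (d2 + 1) k \<in> N2" "(if d2 = 0 then 1 else d2 - 1) \<in> N2"
  shows "\<exists>e1\<in>N1. \<exists>e2\<in>N2. odd_dprod_dist n d1 d2 < odd_dprod_dist n e1 e2"
proof -
  let ?D = "odd_dprod_dist n" and ?down = "\<lambda>d::nat. if d = 0 then 1 else d - 1"
  have down_parity: "even (?down d) \<longleftrightarrow> odd d" for d by auto
  have down_le: "?down d \<le> k" if "d \<le> k" for d using that k by auto
  show ?thesis
  proof (cases "even (d1 + d2)")
    case True
    then have "?D d1 d2 \<le> k" using d by (simp add: odd_dprod_dist_def)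
    consider "d1 < k" "d2 < k" | "d1 = k" | "d2 = k" using d by linarith
    then show ?thesis
    proof cases
      case 1
      then have "?D d1 d2 < ?D (min (d1 + 1) k) (min (d2 + 1) k)"
        using True by (simp add: odd_dprod_dist_def)
      then show ?thesis using N1 N2 by blast
    next
      case 2
      then have "?D (min (d1 + 1) k) (?down d2) = k + 1"
        using True n down_le[OF d(2)] by (simp add: odd_dprod_dist_def down_parity)
      then have "?D d1 d2 < ?D (min (d1 + 1) k) (?down d2)" using \<open>?D d1 d2 \<le> k\<close> by linarith
      then show ?thesis using N1 N2 by blast
    next
      case 3
      then have "?D (?down d1) (min (d2 + 1) k) = k + 1"
        using True n down_le[OF d(1)] by (simp add: odd_dprod_dist_def down_parity)
      then have "?D d1 d2 < ?D (?down d1) (min (d2 + 1) k)" using \<open>?D d1 d2 \<le> k\<close> by linarith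
      then show ?thesis using N1 N2 by blast
    qed
  next
    case False
    then have "?D (?down d1) (?down d2) = n - max (?down d1) (?down d2)"
      by (simp add: odd_dprod_dist_def down_parity)
    moreover have "max (?down d1) (?down d2) < max d1 d2"
      using not_unit False by (auto dest: odd_pos)
    moreover have "max d1 d2 < n" using d n by simp
    moreover have "?D d1 d2 = n - max d1 d2" using False by (simp add: odd_dprod_dist_def)
    ultimately have "?D d1 d2 < ?D (?down d1) (?down d2)" by linarith
    then show ?thesis using N1 N2 by blast
  qed
qed

lemma cycle_norm_neighbours:
  assumes n: "n = 2*k+1" "0 < k" and r: "r < n"
  shows "min (cycle_norm n r + 1) k \<in> cycle_norm n ` {cyc_succ n r, cyc_pred n r}"
    and "(if cycle_norm n r = 0 then 1 else cycle_norm n r - 1) \<in> cycle_norm n ` {cyc_succ n r, cyc_pred n r}"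
  using assms unfolding cycle_norm_def cyc_succ_def cyc_pred_def
  by (cases "r < k"; cases "r = k"; cases "r = k+1"; cases "r = 0"; cases "r + 1 = n"; simp; arith)+

lemma cycle_norm_offset_eq_0_iff: "a < n \<Longrightarrow> c < n \<Longrightarrow> cycle_norm n (cyc_offset n a c) = 0 \<longleftrightarrow> c = a"
  unfolding cycle_norm_def cyc_offset_def by auto

lemma cycle_norm_offset_eq_1_iff:
  "2 \<le> n \<Longrightarrow> a < n \<Longrightarrow> c < n \<Longrightarrow>
    cycle_norm n (cyc_offset n a c) = 1 \<longleftrightarrow> c = cyc_succ n a \<or> c = cyc_pred n a"
  unfolding cycle_norm_def cyc_offset_def cyc_succ_def cyc_pred_def by auto

lemma local_max_gdist_cycle_dprod:
  assumes n: "n = 2*k+1" "0 < k" and lt: "a < n" "b < n" "c < n" "d < n"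
    and max: "\<And>y'. y' \<in> cycle_dprod_V n \<Longrightarrow> cycle_dprod_E n (c, d) y' \<Longrightarrow>
      gdist (cycle_dprod_V n) (cycle_dprod_E n) (a, b) y' \<le>
      gdist (cycle_dprod_V n) (cycle_dprod_E n) (a, b) (c, d)"
  shows "(c = a \<and> (d = cyc_succ n b \<or> d = cyc_pred n b)) \<or>
    (d = b \<and> (c = cyc_succ n a \<or> c = cyc_pred n a))"
proof (rule ccontr)
  let ?N = "\<lambda>x y. cycle_norm n (cyc_offset n x y)"
  assume "\<not> ?thesis"
  moreover have "2 \<le> n" using n by simp
  ultimately have not_unit: "\<not> ((?N a c = 0 \<and> ?N b d = 1) \<or> (?N a c = 1 \<and> ?N b d = 0))"
    by (simp only: lt cycle_norm_offset_eq_0_iff cycle_norm_offset_eq_1_iff) blast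
  have r: "cyc_offset n a c < n" "cyc_offset n b d < n" using lt cyc_offset_lt by auto
  obtain e1 e2 where
    e1: "e1 \<in> cycle_norm n ` {cyc_succ n (cyc_offset n a c), cyc_pred n (cyc_offset n a c)}" and
    e2: "e2 \<in> cycle_norm n ` {cyc_succ n (cyc_offset n b d), cyc_pred n (cyc_offset n b d)}" and
    less: "odd_dprod_dist n (?N a c) (?N b d) < odd_dprod_dist n e1 e2"
    using odd_dprod_dist_not_local_max[OF n cycle_norm_le[OF n(1)] cycle_norm_le[OF n(1)] not_unit
        cycle_norm_neighbours[OF n r(1)] cycle_norm_neighbours[OF n r(2)]]
    by blast
  obtain c' where c': "c' \<in> {cyc_succ n c, cyc_pred n c}" "?N a c' = e1"
    using e1 by (force simp flip: cyc_offset_succ_right[OF lt(1,3)] cyc_offset_pred_right[OF lt(1,3)])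
  obtain d' where d': "d' \<in> {cyc_succ n d, cyc_pred n d}" "?N b d' = e2"
    using e2 by (force simp flip: cyc_offset_succ_right[OF lt(2,4)] cyc_offset_pred_right[OF lt(2,4)])
  have "c' < n" "d' < n" using c'(1) d'(1) lt cyc_succ_lt cyc_pred_lt by auto
  moreover have "cycle_dprod_E n (c, d) (c', d')"
    using c'(1) d'(1) lt \<open>c' < n\<close> \<open>d' < n\<close> cyc_succ_pred
    by (auto simp: dprod_E_def cycle_E_iff)
  ultimately have "gdist (cycle_dprod_V n) (cycle_dprod_E n) (a, b) (c', d') \<le>
      gdist (cycle_dprod_V n) (cycle_dprod_E n) (a, b) (c, d)"
    using max by (simp add: mem_cycle_dprod_V)
  then show False
    using less c'(2) d'(2) lt \<open>c' < n\<close> \<open>d' < n\<close> by (simp add: gdist_cycle_dprod[OF n])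
qed

lemma even_cyc_offset_step:
  assumes "odd n" "a < n" "b < n" and "odd (cyc_offset n a b)"
    and "(c = a \<and> (d = cyc_succ n b \<or> d = cyc_pred n b)) \<or> (d = b \<and> (c = cyc_succ n a \<or> c = cyc_pred n a))"
  shows "even (cyc_offset n c d)"
  using assms cyc_offset_succ_right[OF assms(2,3)] cyc_offset_pred_right[OF assms(2,3)]
    cyc_offset_succ_left[OF assms(2,3)] cyc_offset_pred_left[OF assms(2,3)] cyc_offset_lt[OF assms(2,3)]
  unfolding cyc_succ_def cyc_pred_def by (auto dest: odd_pos)

definition even_offset_vertices :: "nat \<Rightarrow> (nat \<times> nat) set" where
  "even_offset_vertices n = {(a, b). a < n \<and> b < n \<and> even (cyc_offset n a b)}"

lemma strong_resolving_set_even_offset_vertices: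
  assumes n: "n = 2*k+1" "0 < k"
  shows "strong_resolving_set (cycle_dprod_V n) (cycle_dprod_E n) (even_offset_vertices n)"
  unfolding strong_resolving_set_def
proof (intro conjI ballI impI)
  show "even_offset_vertices n \<subseteq> cycle_dprod_V n"
    by (auto simp: even_offset_vertices_def mem_cycle_dprod_V)
  let ?V = "cycle_dprod_V n" and ?E = "cycle_dprod_E n"
  fix u v assume u: "u \<in> ?V" and v: "v \<in> ?V" and "u \<noteq> v"
  show "\<exists>w\<in>even_offset_vertices n. strongly_resolves ?V ?E w u v"
  proof (cases "u \<in> even_offset_vertices n")
    case True
    have "u \<in> interval ?V ?E v u"
      by (rule endpoint_mem_interval[OF has_walk_gdist_cycle_dprod[OF n v u]])
    then show ?thesis using True unfolding strongly_resolves_def by blast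
  next
    case False
    have "finite ?V" by (simp add: dprod_V_def cycle_V_def)
    moreover have "\<exists>m. has_walk ?V ?E m x y" if "x \<in> ?V" "y \<in> ?V" for x y
      using has_walk_gdist_cycle_dprod[OF n that] by blast
    ultimately obtain y where y: "y \<in> ?V" "v \<in> interval ?V ?E u y"
      and y_max: "\<And>y'. y' \<in> ?V \<Longrightarrow> ?E y y' \<Longrightarrow> gdist ?V ?E u y' \<le> gdist ?V ?E u y"
      using interval_extends_to_local_max u v by metis
    obtain a b c d where uy: "u = (a, b)" "y = (c, d)" by (cases u, cases y)
    then have lt: "a < n" "b < n" "c < n" "d < n" using u y(1) by (auto simp: mem_cycle_dprod_V)
    have "odd (cyc_offset n a b)" using False uy lt by (simp add: even_offset_vertices_def)
    moreover have "odd n" using n by simp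
    ultimately have "even (cyc_offset n c d)"
      using even_cyc_offset_step lt(1,2) local_max_gdist_cycle_dprod[OF n lt] y_max uy by blast
    then have "y \<in> even_offset_vertices n" using uy lt by (simp add: even_offset_vertices_def)
    then show ?thesis using y(2) unfolding strongly_resolves_def by blast
  qed
qed

lemma card_even_offset_vertices:
  assumes n: "n = 2*k+1"
  shows "card (even_offset_vertices n) = n * (k + 1)"
proof -
  have row: "card {b \<in> {..<n}. even (cyc_offset n a b)} = k + 1" if a: "a < n" for a
  proof -
    have bij: "bij_betw (cyc_offset n a) {b \<in> {..<n}. even (cyc_offset n a b)} {r \<in> {..<n}. even r}"
      using bij_betw_cyc_offset[OF a] unfolding bij_betw_def inj_on_def by auto
    have "{r \<in> {..<n}. even r} = (\<lambda>i. 2 * i) ` {..k}"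
      using n by (auto elim!: evenE)
    then have "card {r \<in> {..<n}. even r} = k + 1"
      by (simp add: card_image inj_on_def)
    then show ?thesis using bij_betw_same_card[OF bij] by simp
  qed
  have "even_offset_vertices n = Sigma {..<n} (\<lambda>a. {b \<in> {..<n}. even (cyc_offset n a b)})"
    unfolding even_offset_vertices_def by auto
  then show ?thesis using row by (simp add: card_SigmaI)
qed

theorem proposition31:
  fixes k :: nat
  assumes "k > 0"
  shows "strong_metric_dim (dprod_V (cycle_V (2*k+1)) (cycle_V (2*k+1)))
                           (dprod_E (cycle_E (2*k+1)) (cycle_E (2*k+1)))
         = (2*k+1)*(k+1)"
  unfolding strong_metric_dim_def
proof (rule Least_equality)
  show "\<exists>S. strong_resolving_set (cycle_dprod_V (2*k+1)) (cycle_dprod_E (2*k+1)) S \<and>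
      card S = (2*k+1)*(k+1)"
    using strong_resolving_set_even_offset_vertices[OF refl assms] card_even_offset_vertices[OF refl]
    by blast
  show "(2*k+1)*(k+1) \<le> m"
    if "\<exists>S. strong_resolving_set (cycle_dprod_V (2*k+1)) (cycle_dprod_E (2*k+1)) S \<and> card S = m" for m
    using that card_strong_resolving_set_cycle_dprod_ge[OF refl assms] by blast
qed

end
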